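(* Let $p$ be a prime, $s\geq 2$, and $\lambda_i\in\{0,1,\dots,p-1\}$ for $i\in\{0,\dots,s-1\}$. Then $$\tau_s\Big(\sum_{i=0}^{s-1}\lambda_ip^i\Big)=\sum_{i=0}^{s-1}\tau_s(\lambda_ip^i)\quad\text{in }\mathbb{Z}_{p^{s-1}}^p.$$
   Context: For $r\geq1$ and $u\in\mathbb{Z}_{p^r}$ with $p$-ary expansion $u=\sum_{i=0}^{r-1}u_ip^i$, $\phi_r(u)=(u_{r-1},\dots,u_{r-1})+(u_0,\dots,u_{r-2})Y_{r-1}\in\mathbb{Z}_p^{p^{r-1}}$, where $Y_1=(0\ 1\ \cdots\ p-1)$ and $Y_k$ is the $k\times p^k$ matrix with first $k-1$ rows $(Y_{k-1}\ \cdots\ Y_{k-1})$ ($p$ copies) and last row $(0,\dots,0,1,\dots,1,\dots,p-1,\dots,p-1)$ (blocks of length $p^{k-1}$); $\phi_1=\mathrm{id}$; $\Phi_r$ applies $\phi_r$ coordinatewise and concatenates. $\gamma_s$ is the coordinate permutation of $\mathbb{Z}_p^{p^{s-1}}$ given by $\gamma_s(\mathbf{x})_{j+ip+1}=\mathbf{x}_{jp^{s-2}+i+1}$ for $j\in\{0,\dots,p-1\}$, $i\in\{0,\dots,p^{s-2}-1\}$. The map $\tau_s:\mathbb{Z}_{p^s}\to\mathbb{Z}_{p^{s-1}}^p$ is $\tau_s(u)=\Phi_{s-1}^{-1}(\gamma_s^{-1}(\phi_s(u)))$. *)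

theory Defs
  imports Main "HOL-Computational_Algebra.Primes"
begin

(* Elements of Z_m are represented by naturals in {0..<m}; vectors by lists. *)

definition digit :: "nat \<Rightarrow> nat \<Rightarrow> nat \<Rightarrow> nat" where
  "digit p u i = (u div p ^ i) mod p"

(* Y p k i j : entry (row i, column j), 0-indexed, of the k x p^k matrix Y_k *)
fun Y :: "nat \<Rightarrow> nat \<Rightarrow> nat \<Rightarrow> nat \<Rightarrow> nat" where
  "Y p 0 i j = 0"
| "Y p (Suc 0) i j = j"
| "Y p (Suc (Suc k)) i j =
     (if i < Suc k then Y p (Suc k) i (j mod p ^ Suc k) else j div p ^ Suc k)"

(* phi_r : Z_{p^r} -> Z_p^{p^(r-1)} *)
definition phi :: "nat \<Rightarrow> nat \<Rightarrow> nat \<Rightarrow> nat list" where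
  "phi p r u = (if r = 1 then [u] else
     map (\<lambda>j. (digit p u (r - 1) + (\<Sum>i<r - 1. digit p u i * Y p (r - 1) i j)) mod p)
         [0..<p ^ (r - 1)])"

definition Phi :: "nat \<Rightarrow> nat \<Rightarrow> nat list \<Rightarrow> nat list" where
  "Phi p r xs = concat (map (phi p r) xs)"

definition gamma :: "nat \<Rightarrow> nat \<Rightarrow> nat list \<Rightarrow> nat list" where
  "gamma p s x = map (\<lambda>k. x ! ((k mod p) * p ^ (s - 2) + k div p)) [0..<p ^ (s - 1)]"

(* tau_s(u) = Phi_{s-1}^{-1}(gamma_s^{-1}(phi_s u)), i.e. the unique v in Z_{p^{s-1}}^p
   with gamma_s(Phi_{s-1}(v)) = phi_s(u) *)
definition tau :: "nat \<Rightarrow> nat \<Rightarrow> nat \<Rightarrow> nat list" where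
  "tau p s u = (THE v. length v = p \<and> (\<forall>x\<in>set v. x < p ^ (s - 1))
                    \<and> gamma p s (Phi p (s - 1) v) = phi p s u)"

definition vadd :: "nat \<Rightarrow> nat list \<Rightarrow> nat list \<Rightarrow> nat list" where
  "vadd m xs ys = map2 (\<lambda>a b. (a + b) mod m) xs ys"

definition vsum :: "nat \<Rightarrow> nat \<Rightarrow> (nat \<Rightarrow> nat list) \<Rightarrow> nat \<Rightarrow> nat list" where
  "vsum m n f s = foldr (\<lambda>i acc. vadd m (f i) acc) [0..<s] (replicate n 0)"

end

theory Submission
  imports Defs "HOL-Number_Theory.Cong"
begin

(* Column j of Y_k lists the p-ary digits of j, so phi_s(u) at position j is the top digit of u
   plus the dot product of the lower digits of u and j. Comparing digits shows that tau_s has the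
   closed form  tau_s(u)_a = (u div p + a (u mod p) p^(s-2)) mod p^(s-1):  this vector is mapped to
   phi_s(u) by gamma_s o Phi_{s-1}, which is injective because phi_r is (its entries at 0 and p^i
   recover the top digit and the sum of the top and the i-th digit). For u = sum lam_i p^i with
   lam_0 < p, both u div p and u mod p are the sums of the same quantities for the terms lam_i p^i,
   so the closed form is additive over this decomposition. *)

lemma digit_0: "digit p x 0 = x mod p"
  by (simp add: digit_def)

lemma digit_Suc: "digit p x (Suc i) = digit p (x div p) i"
  by (simp add: digit_def div_mult2_eq power_Suc)

lemma digit_less: "0 < p \<Longrightarrow> digit p x i < p"
  by (simp add: digit_def)

lemma digit_eq_0_if_less: "x < p ^ i \<Longrightarrow> digit p x i = 0"
  by (simp add: digit_def)

lemma digit_mod_power: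
  assumes "i < n"
  shows "digit p (x mod p ^ n) i = digit p x i"
proof -
  obtain m where n: "n = i + Suc m"
    using assms less_iff_Suc_add by (auto simp: add.commute)
  have "x mod (a * b) div a = x div a mod b" for a b :: nat
    by (cases "a = 0") (simp_all add: mod_mult2_eq)
  then have "x mod p ^ n div p ^ i = x div p ^ i mod p ^ Suc m"
    by (simp only: n power_add)
  then show ?thesis
    by (simp add: digit_def mod_mod_cancel)
qed

lemma digit_add_mult_power_below:
  assumes "i < k"
  shows "digit p (y + c * p ^ k) i = digit p y i"
  using digit_mod_power[OF assms, of p "y + c * p ^ k"] digit_mod_power[OF assms, of p y]
  by simp

lemma digit_add_mult_power_same:
  assumes "0 < p"
  shows "digit p (y + c * p ^ k) k = (digit p y k + c) mod p"
  using assms by (simp add: digit_def add.commute mod_add_right_eq)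

lemma digit_power:
  assumes "1 < p"
  shows "digit p (p ^ k) i = (if i = k then 1 else 0)"
proof -
  consider "i < k" | "i = k" | "k < i" by linarith
  then show ?thesis
  proof cases
    case 1
    then show ?thesis
      using digit_add_mult_power_below[of i k p 0 1] by (simp add: digit_def)
  next
    case 2
    then show ?thesis
      using assms digit_add_mult_power_same[of p 0 1 k] by (simp add: digit_def)
  next
    case 3
    then show ?thesis
      using assms by (simp add: digit_eq_0_if_less power_strict_increasing)
  qed
qed

lemma mod_power_eq_sum_digits: "x mod p ^ n = (\<Sum>i<n. digit p x i * p ^ i)"
proof (induction n)
  case 0
  then show ?case by simp
next
  case (Suc n)
  then show ?case
    by (simp add: digit_def mod_mult2_eq power_Suc2 mult.commute[of p])
qed

lemma eq_if_digits_eq: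
  assumes "x < p ^ n" "y < p ^ n" "\<And>i. i < n \<Longrightarrow> digit p x i = digit p y i"
  shows "x = y"
  using mod_power_eq_sum_digits[of x p n] mod_power_eq_sum_digits[of y p n] assms
  by simp

lemma Y_eq_digit: "i < k \<Longrightarrow> j < p ^ k \<Longrightarrow> Y p k i j = digit p j i"
proof (induction p k i j rule: Y.induct)
  case (3 p k i j)
  then have "0 < p" by (auto intro: gr0I)
  show ?case
  proof (cases "i < Suc k")
    case True
    then show ?thesis
      using 3 \<open>0 < p\<close> digit_mod_power[OF True, of p j] by simp
  next
    case False
    with "3.prems" have "i = Suc k" by simp
    moreover have "j div p ^ Suc k < p"
      using "3.prems"(2) by (simp add: less_mult_imp_div_less power_Suc2)
    ultimately show ?thesis by (simp add: digit_def)
  qed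
qed (simp_all add: digit_def)

lemma length_phi [simp]: "length (phi p r x) = p ^ (r - 1)"
  by (simp add: phi_def)

lemma nth_phi:
  assumes "j < p ^ n" and "0 < n \<or> x < p"
  shows "phi p (Suc n) x ! j = (digit p x n + (\<Sum>i<n. digit p x i * digit p j i)) mod p"
  using assms by (auto simp: phi_def Y_eq_digit digit_def)

lemma inj_on_phi:
  assumes "1 < p"
  shows "inj_on (phi p (Suc n)) {..<p ^ Suc n}"
proof (rule inj_onI)
  fix x y assume x: "x \<in> {..<p ^ Suc n}" and y: "y \<in> {..<p ^ Suc n}"
    and eq: "phi p (Suc n) x = phi p (Suc n) y"
  have phi_at_power: "phi p (Suc n) z ! (p ^ i) = (digit p z n + digit p z i) mod p"
    if "i < n" for z i
  proof -
    have "p ^ i < p ^ n"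
      using that assms by (simp add: power_strict_increasing)
    from nth_phi[OF this, of z] show ?thesis
      using that assms by (simp add: digit_power if_distrib cong: if_cong)
  qed
  have phi_at_0: "phi p (Suc n) z ! 0 = digit p z n" if "z < p ^ Suc n" for z
    using nth_phi[of 0 p n z] that assms by (cases n) (auto simp: digit_def)
  have top: "digit p x n = digit p y n"
    using arg_cong[OF eq, of "\<lambda>v. v ! 0"] x y by (simp add: phi_at_0)
  have "digit p x i = digit p y i" if "i < n" for i
  proof -
    have "[digit p x n + digit p x i = digit p x n + digit p y i] (mod p)"
      using arg_cong[OF eq, of "\<lambda>v. v ! (p ^ i)"] that top by (simp add: phi_at_power cong_def)
    then have "[digit p x i = digit p y i] (mod p)"
      by (simp add: cong_add_lcancel_nat)
    then show ?thesis
      using assms by (simp add: cong_less_modulus_unique_nat digit_less)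
  qed
  with top have "digit p x i = digit p y i" if "i < Suc n" for i
    using that less_Suc_eq by auto
  with x y show "x = y"
    using eq_if_digits_eq[of x p "Suc n" y] by blast
qed

lemma nth_Phi:
  assumes "a < length v" "b < p ^ n"
  shows "Phi p (Suc n) v ! (a * p ^ n + b) = phi p (Suc n) (v ! a) ! b"
  using assms
proof (induction v arbitrary: a)
  case Nil
  then show ?case by simp
next
  case (Cons x v)
  then show ?case
    by (cases a) (auto simp: Phi_def nth_append add.assoc)
qed

lemma nth_gamma_Phi:
  assumes "length v = p" "a < p" "k < p ^ n"
  shows "gamma p (Suc (Suc n)) (Phi p (Suc n) v) ! (a + p * k) = phi p (Suc n) (v ! a) ! k"
proof -
  have "a + p * k < p * Suc k"
    using assms(2) by simp
  also have "\<dots> \<le> p * p ^ n"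
    using assms(3) by (intro mult_left_mono) auto
  finally have "a + p * k < p ^ Suc n" by simp
  then show ?thesis
    using assms nth_Phi[of a v k p n] by (simp add: gamma_def mult.commute)
qed

lemma inj_on_gamma_Phi:
  assumes "1 < p"
  shows "inj_on (\<lambda>v. gamma p (Suc (Suc n)) (Phi p (Suc n) v))
           {v. length v = p \<and> (\<forall>x\<in>set v. x < p ^ Suc n)}"
proof (rule inj_onI)
  fix v w
  assume v: "v \<in> {v. length v = p \<and> (\<forall>x\<in>set v. x < p ^ Suc n)}"
    and w: "w \<in> {v. length v = p \<and> (\<forall>x\<in>set v. x < p ^ Suc n)}"
    and eq: "gamma p (Suc (Suc n)) (Phi p (Suc n) v) = gamma p (Suc (Suc n)) (Phi p (Suc n) w)"
  show "v = w"
  proof (rule nth_equalityI)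
    show "length v = length w"
      using v w by simp
  next
    fix a assume "a < length v"
    with v w have a: "a < p" "v ! a < p ^ Suc n" "w ! a < p ^ Suc n"
      by auto
    have "phi p (Suc n) (v ! a) ! k = phi p (Suc n) (w ! a) ! k" if "k < p ^ n" for k
      using nth_gamma_Phi[of v p a k n] nth_gamma_Phi[of w p a k n] eq v w a that by simp
    then have "phi p (Suc n) (v ! a) = phi p (Suc n) (w ! a)"
      by (intro nth_equalityI) simp_all
    then show "v ! a = w ! a"
      using inj_on_phi[OF assms, of n] a by (auto dest: inj_onD)
  qed
qed

lemma gamma_Phi_shift_eq_phi:
  fixes u n :: nat
  assumes "1 < p"
  defines "v \<equiv> map (\<lambda>a. (u div p + a * (u mod p) * p ^ n) mod p ^ Suc n) [0..<p]"
  shows "gamma p (Suc (Suc n)) (Phi p (Suc n) v) = phi p (Suc (Suc n)) u"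
proof (rule nth_equalityI)
  show "length (gamma p (Suc (Suc n)) (Phi p (Suc n) v)) = length (phi p (Suc (Suc n)) u)"
    by (simp add: gamma_def)
next
  fix k assume "k < length (gamma p (Suc (Suc n)) (Phi p (Suc n) v))"
  then have k: "k < p * p ^ n"
    by (simp add: gamma_def)
  define a where "a = k mod p"
  define k' where "k' = k div p"
  have a: "a < p" and k_eq: "k = a + p * k'" and k': "k' < p ^ n"
    using assms(1) k by (simp_all add: a_def k'_def less_mult_imp_div_less mult.commute)
  define x where "x = (u div p + a * (u mod p) * p ^ n) mod p ^ Suc n"
  have x_low: "digit p x i = digit p u (Suc i)" if "i < n" for i
    using that by (simp add: x_def digit_mod_power digit_add_mult_power_below digit_Suc del: power_Suc)
  have x_top: "digit p x n = (digit p u (Suc n) + a * digit p u 0) mod p"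
    using assms(1) by (simp add: x_def digit_mod_power digit_add_mult_power_same digit_Suc digit_0 del: power_Suc)
  have k_digits: "digit p k 0 = a" "digit p k (Suc i) = digit p k' i" for i
    by (simp_all add: a_def k'_def digit_0 digit_Suc)
  have "gamma p (Suc (Suc n)) (Phi p (Suc n) v) ! k = phi p (Suc n) x ! k'"
    using nth_gamma_Phi[of v p a k' n] a k' by (simp add: k_eq v_def x_def)
  also have "\<dots> = (digit p x n + (\<Sum>i<n. digit p x i * digit p k' i)) mod p"
    using k' x_def assms(1) by (cases n) (simp_all add: nth_phi)
  also have "\<dots> = (digit p u (Suc n) + a * digit p u 0
                     + (\<Sum>i<n. digit p u (Suc i) * digit p k' i)) mod p"
    by (simp add: x_top x_low mod_add_left_eq)
  also have "\<dots> = (digit p u (Suc n) + (\<Sum>i<Suc n. digit p u i * digit p k i)) mod p"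
    unfolding sum.lessThan_Suc_shift by (simp add: k_digits algebra_simps)
  also have "\<dots> = phi p (Suc (Suc n)) u ! k"
    using k by (simp add: nth_phi)
  finally show "gamma p (Suc (Suc n)) (Phi p (Suc n) v) ! k = phi p (Suc (Suc n)) u ! k" .
qed

lemma tau_eq:
  assumes "1 < p" "2 \<le> s"
  shows "tau p s u = map (\<lambda>a. (u div p + a * (u mod p) * p ^ (s - 2)) mod p ^ (s - 1)) [0..<p]"
proof -
  obtain n where s: "s = Suc (Suc n)"
    using assms(2) by (metis add_2_eq_Suc le_Suc_ex)
  define v where "v = map (\<lambda>a. (u div p + a * (u mod p) * p ^ n) mod p ^ Suc n) [0..<p]"
  let ?V = "{v. length v = p \<and> (\<forall>x\<in>set v. x < p ^ Suc n)}"
  have v: "v \<in> ?V" "gamma p (Suc (Suc n)) (Phi p (Suc n) v) = phi p (Suc (Suc n)) u"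
    using assms(1) gamma_Phi_shift_eq_phi[OF assms(1), where u = u and n = n] by (auto simp: v_def)
  have "tau p s u = v"
    unfolding tau_def s diff_Suc_1
  proof (rule the_equality)
    fix w
    assume "length w = p \<and> (\<forall>x\<in>set w. x < p ^ Suc n)
      \<and> gamma p (Suc (Suc n)) (Phi p (Suc n) w) = phi p (Suc (Suc n)) u"
    then show "w = v"
      using v inj_onD[OF inj_on_gamma_Phi[OF assms(1), of n]] by auto
  qed (use v in auto)
  then show ?thesis
    by (simp add: s v_def)
qed

lemma length_tau: "1 < p \<Longrightarrow> 2 \<le> s \<Longrightarrow> length (tau p s u) = p"
  by (simp add: tau_eq)

lemma nth_tau:
  "1 < p \<Longrightarrow> 2 \<le> s \<Longrightarrow> a < p \<Longrightarrow>
    tau p s u ! a = (u div p + a * (u mod p) * p ^ (s - 2)) mod p ^ (s - 1)"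
  by (simp add: tau_eq)

lemma foldr_vadd:
  assumes "\<And>i. i \<in> set xs \<Longrightarrow> length (f i) = n"
  shows "length (foldr (\<lambda>i. vadd m (f i)) xs (replicate n 0)) = n
    \<and> (\<forall>a<n. foldr (\<lambda>i. vadd m (f i)) xs (replicate n 0) ! a = (\<Sum>i\<leftarrow>xs. f i ! a) mod m)"
  using assms by (induction xs) (auto simp: vadd_def mod_add_right_eq)

lemma length_vsum: "(\<And>i. i < s \<Longrightarrow> length (f i) = n) \<Longrightarrow> length (vsum m n f s) = n"
  using foldr_vadd[of "[0..<s]" f n m] by (simp add: vsum_def)

lemma nth_vsum:
  "(\<And>i. i < s \<Longrightarrow> length (f i) = n) \<Longrightarrow> a < n \<Longrightarrow> vsum m n f s ! a = (\<Sum>i<s. f i ! a) mod m"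
  using foldr_vadd[of "[0..<s]" f n m]
  by (simp add: vsum_def lessThan_atLeast0 sum_set_upt_conv_sum_list_nat[symmetric])

lemma sum_mult_power_Suc:
  fixes d :: "nat \<Rightarrow> 'a::comm_semiring_1"
  shows "(\<Sum>i<Suc n. d i * p ^ i) = d 0 + p * (\<Sum>i<n. d (Suc i) * p ^ i)"
  unfolding sum.lessThan_Suc_shift by (simp add: sum_distrib_left ac_simps)

lemma sum_mult_power_div:
  fixes d :: "nat \<Rightarrow> nat"
  assumes "d 0 < p"
  shows "(\<Sum>i<n. d i * p ^ i) div p = (\<Sum>i<n. d i * p ^ i div p)"
proof (cases n)
  case (Suc m)
  then show ?thesis
    using assms by (simp add: sum_mult_power_Suc sum.lessThan_Suc_shift ac_simps del: sum.lessThan_Suc)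
qed simp

lemma sum_mult_power_mod:
  fixes d :: "nat \<Rightarrow> nat"
  assumes "d 0 < p"
  shows "(\<Sum>i<n. d i * p ^ i) mod p = (\<Sum>i<n. d i * p ^ i mod p)"
proof (cases n)
  case (Suc m)
  then show ?thesis
    using assms by (simp add: sum_mult_power_Suc sum.lessThan_Suc_shift ac_simps del: sum.lessThan_Suc)
qed simp

theorem corollary1:
  fixes p s :: nat and lam :: "nat \<Rightarrow> nat"
  assumes "prime p" and "s \<ge> 2" and "\<forall>i<s. lam i < p"
  shows "tau p s (\<Sum>i<s. lam i * p ^ i)
           = vsum (p ^ (s - 1)) p (\<lambda>i. tau p s (lam i * p ^ i)) s"
proof -
  have p: "1 < p"
    using assms(1) by (rule prime_gt_1_nat)
  note tau = length_tau[OF p assms(2)] nth_tau[OF p assms(2)]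
  have lam0: "lam 0 < p"
    using assms(2,3) by simp
  define u where "u = (\<Sum>i<s. lam i * p ^ i)"
  define m where "m = p ^ (s - 1)"
  show ?thesis
    unfolding u_def[symmetric] m_def[symmetric]
  proof (rule nth_equalityI)
    fix a assume "a < length (tau p s u)"
    then have a: "a < p"
      by (simp add: tau)
    have "vsum m p (\<lambda>i. tau p s (lam i * p ^ i)) s ! a
        = (\<Sum>i<s. (lam i * p ^ i div p + a * (lam i * p ^ i mod p) * p ^ (s - 2)) mod m) mod m"
      using a by (simp add: nth_vsum tau m_def)
    also have "\<dots> = (\<Sum>i<s. lam i * p ^ i div p + a * (lam i * p ^ i mod p) * p ^ (s - 2)) mod m"
      by (simp add: mod_sum_eq)
    also have "\<dots> = (u div p + a * (u mod p) * p ^ (s - 2)) mod m"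
      using sum_mult_power_div[of lam p s, OF lam0] sum_mult_power_mod[of lam p s, OF lam0]
      by (simp add: u_def sum.distrib sum_distrib_left sum_distrib_right)
    also have "\<dots> = tau p s u ! a"
      using a by (simp add: tau m_def)
    finally show "tau p s u ! a = vsum m p (\<lambda>i. tau p s (lam i * p ^ i)) s ! a" ..
  qed (simp add: tau length_vsum)
qed

end
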